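(* Let $(\Lambda_t)_{t\ge 0}$ be a family of completely positive trace-preserving (CPTP) maps on single-qubit density matrices with $\Lambda_0=\mathrm{id}$. Suppose that for every $0\le s\le t$ there is a linear map $V_{t,s}$ with $\Lambda_t=V_{t,s}\circ\Lambda_s$ that admits the decomposition $$V_{t,s}[X]=p\,\mathcal{E}_1[X]+(1-p)\,\mathcal{E}_2[X^{T}]$$ for all $2\times 2$ matrices $X$, where $p=p(t,s)\in[0,1]$, $\mathcal{E}_1=\mathcal{E}_1^{(t,s)}$ and $\mathcal{E}_2=\mathcal{E}_2^{(t,s)}$ are CPTP maps on qubits, and $X^T$ is the transpose in a fixed basis. (Such a $V_{t,s}$ may fail to be completely positive, i.e. the evolution may be non-Markovian.) Then for every contractive function $f$ and every pair of single-qubit states $\rho,\sigma$, the function $t\mapsto f(\Lambda_t[\rho],\Lambda_t[\sigma])$ is non-increasing: $f(\Lambda_t[\rho],\Lambda_t[\sigma])\le f(\Lambda_s[\rho],\Lambda_s[\sigma])$ for all $0\le s\le t$; in particular $\frac{\mathrm d}{\mathrm dt}f(\Lambda_t[\rho],\Lambda_t[\sigma])\le 0$ wherever the derivative exists.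
   Context: A function $f(\rho,\sigma)$ of pairs of quantum states (density matrices) is called contractive if $f(\Lambda[\rho],\Lambda[\sigma])\le f(\rho,\sigma)$ for every CPTP map $\Lambda$ and all states $\rho,\sigma$ (examples: trace distance $\tfrac12\|\rho-\sigma\|_1$, infidelity $1-\|\sqrt\rho\sqrt\sigma\|_1$, quantum relative entropy). An evolution $(\Lambda_t)$ is called Markovian (CP-divisible) if for every $0\le s\le t$ there exists a CPTP map $V_{t,s}$ with $\Lambda_t=V_{t,s}\circ\Lambda_s$, and non-Markovian otherwise. *)

theory Defs
  imports "HOL-Analysis.Analysis"
begin

type_synonym qmat = "complex ^ 2 ^ 2"

definition qscale :: "complex \<Rightarrow> qmat \<Rightarrow> qmat" where
  "qscale c A = (\<chi> i j. c * A $ i $ j)"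

definition qtrace :: "qmat \<Rightarrow> complex" where
  "qtrace A = (\<Sum>i\<in>UNIV. A $ i $ i)"

definition qpsd :: "qmat \<Rightarrow> bool" where
  "qpsd A \<longleftrightarrow> (\<forall>v :: complex ^ 2.
     (let q = (\<Sum>k\<in>UNIV. cnj (v $ k) * ((A *v v) $ k)) in Im q = 0 \<and> Re q \<ge> 0))"

definition density :: "qmat \<Rightarrow> bool" where
  "density \<rho> \<longleftrightarrow> qpsd \<rho> \<and> qtrace \<rho> = 1"

definition qlinear :: "(qmat \<Rightarrow> qmat) \<Rightarrow> bool" where
  "qlinear \<Lambda> \<longleftrightarrow> (\<forall>A B. \<Lambda> (A + B) = \<Lambda> A + \<Lambda> B) \<and> (\<forall>c A. \<Lambda> (qscale c A) = qscale c (\<Lambda> A))"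

definition trace_preserving :: "(qmat \<Rightarrow> qmat) \<Rightarrow> bool" where
  "trace_preserving \<Lambda> \<longleftrightarrow> (\<forall>A. qtrace (\<Lambda> A) = qtrace A)"

text \<open>An operator on C^n \<otimes> C^2, written as an n x n block matrix of 2x2 blocks M i j (i,j<n),
  is positive semidefinite.\<close>
definition block_psd :: "nat \<Rightarrow> (nat \<Rightarrow> nat \<Rightarrow> qmat) \<Rightarrow> bool" where
  "block_psd n M \<longleftrightarrow> (\<forall>w :: nat \<Rightarrow> complex ^ 2.
     (let q = (\<Sum>i<n. \<Sum>j<n. \<Sum>k\<in>UNIV. cnj (w i $ k) * ((M i j *v w j) $ k))
      in Im q = 0 \<and> Re q \<ge> 0))"

text \<open>Complete positivity: id_n \<otimes> \<Lambda> is positive for every ancilla dimension n.\<close>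
definition completely_positive :: "(qmat \<Rightarrow> qmat) \<Rightarrow> bool" where
  "completely_positive \<Lambda> \<longleftrightarrow>
     (\<forall>(n::nat) M. block_psd n M \<longrightarrow> block_psd n (\<lambda>i j. \<Lambda> (M i j)))"

definition CPTP :: "(qmat \<Rightarrow> qmat) \<Rightarrow> bool" where
  "CPTP \<Lambda> \<longleftrightarrow> qlinear \<Lambda> \<and> completely_positive \<Lambda> \<and> trace_preserving \<Lambda>"

definition contractive :: "(qmat \<Rightarrow> qmat \<Rightarrow> real) \<Rightarrow> bool" where
  "contractive f \<longleftrightarrow> (\<forall>\<Lambda> \<rho> \<sigma>. CPTP \<Lambda> \<longrightarrow> density \<rho> \<longrightarrow> density \<sigma> \<longrightarrow>
      f (\<Lambda> \<rho>) (\<Lambda> \<sigma>) \<le> f \<rho> \<sigma>)"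

end

theory Submission
  imports Defs
begin

text \<open>
  Transposition is not completely positive, so V need not be CPTP. But on any two given
  qubit states it agrees with a unitary conjugation. In Bloch coordinates transposition is
  the reflection y -> -y, which equals the rotation by pi about the y-axis composed with the
  point reflection b -> -b; and the rotation by pi about an axis n acts as the point
  reflection on every b orthogonal to n. Choosing n orthogonal to the Bloch vectors of both
  states, the transpose in V can be replaced by conjugation with the unitary implementing
  the two rotations, giving a CPTP map that agrees with V on the pair, so contractivity of f
  applies to every step from time s to time t.
\<close>

definition qadj :: "qmat \<Rightarrow> qmat" where
  "qadj A = (\<chi> i j. cnj (A $ j $ i))"

lemma quadratic_form_conj:
  fixes A M :: qmat
  shows "(\<Sum>k\<in>UNIV. cnj (w $ k) * ((A ** M ** qadj A) *v u) $ k)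
       = (\<Sum>k\<in>UNIV. cnj ((qadj A *v w) $ k) * ((M *v (qadj A *v u)) $ k))"
  by (simp add: sum_2 matrix_matrix_mult_def matrix_vector_mult_def qadj_def algebra_simps)

lemma block_psd_conj:
  assumes "block_psd n M"
  shows "block_psd n (\<lambda>i j. A ** M i j ** qadj A)"
  unfolding block_psd_def
proof
  fix w :: "nat \<Rightarrow> complex^2"
  have "(\<Sum>i<n. \<Sum>j<n. \<Sum>k\<in>UNIV. cnj (w i $ k) * ((A ** M i j ** qadj A) *v w j) $ k)
     = (\<Sum>i<n. \<Sum>j<n. \<Sum>k\<in>UNIV.
          cnj ((\<lambda>i. qadj A *v w i) i $ k) * ((M i j *v (\<lambda>i. qadj A *v w i) j) $ k))"
    by (simp add: quadratic_form_conj)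
  with assms show "let q = (\<Sum>i<n. \<Sum>j<n. \<Sum>k\<in>UNIV. cnj (w i $ k) * ((A ** M i j ** qadj A) *v w j) $ k)
      in Im q = 0 \<and> 0 \<le> Re q"
    unfolding block_psd_def by metis
qed

lemma block_psd_nonneg_comb:
  assumes "block_psd n M1" "block_psd n M2" "0 \<le> p" "0 \<le> q"
  shows "block_psd n (\<lambda>i j. p *\<^sub>R M1 i j + q *\<^sub>R M2 i j)"
  unfolding block_psd_def Let_def
proof
  fix w :: "nat \<Rightarrow> complex^2"
  define Q where "Q M = (\<Sum>i<n. \<Sum>j<n. \<Sum>k\<in>UNIV. cnj (w i $ k) * ((M i j *v w j) $ k))" for M
  have entry: "(\<Sum>k\<in>UNIV. cnj (w i $ k) * (((p *\<^sub>R M1 i j + q *\<^sub>R M2 i j) *v w j) $ k))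
     = of_real p * (\<Sum>k\<in>UNIV. cnj (w i $ k) * ((M1 i j *v w j) $ k))
       + of_real q * (\<Sum>k\<in>UNIV. cnj (w i $ k) * ((M2 i j *v w j) $ k))" for i j
    by (simp add: sum_2 matrix_vector_mult_def) (simp add: scaleR_conv_of_real algebra_simps)
  have "Q (\<lambda>i j. p *\<^sub>R M1 i j + q *\<^sub>R M2 i j) = of_real p * Q M1 + of_real q * Q M2"
    unfolding Q_def entry by (simp add: sum.distrib sum_distrib_left)
  moreover have "Im (Q M1) = 0 \<and> 0 \<le> Re (Q M1)" "Im (Q M2) = 0 \<and> 0 \<le> Re (Q M2)"
    using assms(1,2) unfolding block_psd_def Let_def Q_def by blast+
  ultimately show "Im (Q (\<lambda>i j. p *\<^sub>R M1 i j + q *\<^sub>R M2 i j)) = 0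
      \<and> 0 \<le> Re (Q (\<lambda>i j. p *\<^sub>R M1 i j + q *\<^sub>R M2 i j))"
    using assms(3,4) by simp
qed

lemma qpsd_iff_block_psd_1: "qpsd A \<longleftrightarrow> block_psd 1 (\<lambda>i j. A)"
proof
  show "qpsd A \<Longrightarrow> block_psd 1 (\<lambda>i j. A)"
    unfolding qpsd_def block_psd_def by simp
next
  assume block: "block_psd 1 (\<lambda>i j. A)"
  show "qpsd A"
    unfolding qpsd_def
  proof
    fix v :: "complex^2"
    from block[unfolded block_psd_def, rule_format, of "\<lambda>_. v"]
    show "let q = \<Sum>k\<in>UNIV. cnj (v $ k) * (A *v v) $ k in Im q = 0 \<and> 0 \<le> Re q"
      by simp
  qed
qed

lemma density_CPTP_image:
  assumes "CPTP \<Lambda>" "density \<rho>"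
  shows "density (\<Lambda> \<rho>)"
  using assms unfolding CPTP_def completely_positive_def trace_preserving_def density_def
  by (simp add: qpsd_iff_block_psd_1)

lemma qpsd_hermitian:
  assumes "qpsd A"
  shows "Im (A$1$1) = 0" "Im (A$2$2) = 0" "A$2$1 = cnj (A$1$2)"
proof -
  have real_form: "Im (\<Sum>k\<in>UNIV. cnj (v $ k) * ((A *v v) $ k)) = 0" for v
    using assms unfolding qpsd_def Let_def by blast
  from real_form[of "vector [1,0]"] show diag1: "Im (A$1$1) = 0"
    by (simp add: sum_2 matrix_vector_mult_def)
  from real_form[of "vector [0,1]"] show diag2: "Im (A$2$2) = 0"
    by (simp add: sum_2 matrix_vector_mult_def)
  from real_form[of "vector [1,1]"] diag1 diag2 have "Im (A$1$2) + Im (A$2$1) = 0"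
    by (simp add: sum_2 matrix_vector_mult_def)
  moreover from real_form[of "vector [1,\<i>]"] diag1 diag2 have "Re (A$1$2) - Re (A$2$1) = 0"
    by (simp add: sum_2 matrix_vector_mult_def)
  ultimately show "A$2$1 = cnj (A$1$2)"
    by (simp add: complex_eq_iff)
qed

text \<open>
  With n = (Re z, Im z, c) a unit vector, the matrix below is sigma_y (n . sigma), so conjugation
  by it is the rotation by pi about n followed by that about the y-axis.
  \<open>transposes_along c z r\<close> states that n is orthogonal to the Bloch vector
  (2 Re r12, -2 Im r12, r11 - r22) of r.
\<close>

definition transposing_unitary :: "real \<Rightarrow> complex \<Rightarrow> qmat" where
  "transposing_unitary c z =
     vector [vector [-\<i> * z, \<i> * complex_of_real c], vector [\<i> * complex_of_real c, \<i> * cnj z]]"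

definition transposes_along :: "real \<Rightarrow> complex \<Rightarrow> qmat \<Rightarrow> bool" where
  "transposes_along c z r \<longleftrightarrow> 2 * Re (z * r$1$2) + c * Re (r$1$1 - r$2$2) = 0"

lemma transposing_unitary_conj:
  fixes r :: qmat
  assumes "Im (r$1$1) = 0" "Im (r$2$2) = 0" "r$2$1 = cnj (r$1$2)"
    and "c\<^sup>2 + (Re z)\<^sup>2 + (Im z)\<^sup>2 = 1"
    and "transposes_along c z r"
  shows "transposing_unitary c z ** r ** qadj (transposing_unitary c z) = transpose r"
  using assms unfolding transposes_along_def
  apply (simp add: vec_eq_iff forall_2 matrix_matrix_mult_def sum_2 transposing_unitary_def
      qadj_def transpose_def complex_eq_iff)
  apply (simp add: algebra_simps)
  apply (intro conjI; algebra)
  done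

lemma transposing_unitary_trace:
  assumes "c\<^sup>2 + (Re z)\<^sup>2 + (Im z)\<^sup>2 = 1"
  shows "qtrace (transposing_unitary c z ** X ** qadj (transposing_unitary c z)) = qtrace X"
  using assms
  apply (simp add: qtrace_def matrix_matrix_mult_def sum_2 transposing_unitary_def qadj_def
      complex_eq_iff)
  apply (simp add: algebra_simps)
  apply (intro conjI; algebra)
  done

lemma exists_common_axis:
  "\<exists>c z. c\<^sup>2 + (Re z)\<^sup>2 + (Im z)\<^sup>2 = 1 \<and> transposes_along c z r1 \<and> transposes_along c z r2"
proof -
  define bloch where
    "bloch r = (vector [2 * Re (r$1$2), - 2 * Im (r$1$2), Re (r$1$1 - r$2$2)] :: real^3)"
    for r :: qmat
  have "dim {bloch r1, bloch r2} \<le> card {bloch r1, bloch r2}"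
    by (rule dim_le_card) (auto intro: span_base)
  also have "\<dots> \<le> 2"
    by (simp add: card_insert_le_m1)
  finally have "dim {bloch r1, bloch r2} < DIM(real^3)"
    by simp
  then obtain n :: "real^3" where "n \<noteq> 0"
    and n_orth: "\<And>y. y \<in> span {bloch r1, bloch r2} \<Longrightarrow> orthogonal n y"
    using orthogonal_to_subspace_exists by blast
  have n_bloch: "n \<bullet> bloch r1 = 0" "n \<bullet> bloch r2 = 0"
    using n_orth[of "bloch r1"] n_orth[of "bloch r2"] by (auto simp: orthogonal_def span_base)
  have "n \<bullet> n = n$1^2 + n$2^2 + n$3^2"
    by (simp add: inner_vec_def sum_3 power2_eq_square)
  with \<open>n \<noteq> 0\<close> have norm_pos: "0 < n$1^2 + n$2^2 + n$3^2"
    by (metis inner_gt_zero_iff)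
  define s where "s = sqrt (n$1^2 + n$2^2 + n$3^2)"
  have s: "0 < s" "s\<^sup>2 = n$1^2 + n$2^2 + n$3^2"
    using norm_pos unfolding s_def by auto
  define c where "c = n$3 / s"
  define z where "z = Complex (n$1 / s) (n$2 / s)"
  have "c\<^sup>2 + (Re z)\<^sup>2 + (Im z)\<^sup>2 = (n$1^2 + n$2^2 + n$3^2) / s\<^sup>2"
    unfolding c_def z_def by (simp add: power_divide add_divide_distrib)
  then have unit: "c\<^sup>2 + (Re z)\<^sup>2 + (Im z)\<^sup>2 = 1"
    using s norm_pos by simp
  have "transposes_along c z r" if "n \<bullet> bloch r = 0" for r
  proof -
    have "n$1 * (2 * Re (r$1$2)) + n$2 * (- 2 * Im (r$1$2)) + n$3 * Re (r$1$1 - r$2$2) = 0"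
      using that by (simp add: bloch_def inner_vec_def sum_3)
    then have "(2 * Re (z * r$1$2) + c * Re (r$1$1 - r$2$2)) * s = 0"
      using s unfolding c_def z_def by (simp add: field_simps) (metis distrib_left)
    then show ?thesis
      using s unfolding transposes_along_def by simp
  qed
  with unit n_bloch show ?thesis
    by blast
qed

lemma transpose_pair_by_unitary:
  assumes "density r" "density q"
  obtains U where "\<And>X. qtrace (U ** X ** qadj U) = qtrace X"
    and "U ** r ** qadj U = transpose r" and "U ** q ** qadj U = transpose q"
proof -
  obtain c z where cz: "c\<^sup>2 + (Re z)\<^sup>2 + (Im z)\<^sup>2 = 1"
    "transposes_along c z r" "transposes_along c z q"
    using exists_common_axis by blast
  have "Im (r$1$1) = 0" "Im (r$2$2) = 0" "r$2$1 = cnj (r$1$2)"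
       "Im (q$1$1) = 0" "Im (q$2$2) = 0" "q$2$1 = cnj (q$1$2)"
    using assms qpsd_hermitian unfolding density_def by auto
  with cz show ?thesis
    by (intro that[of "transposing_unitary c z"] transposing_unitary_trace
        transposing_unitary_conj)
qed

lemma qtrace_comb: "qtrace (p *\<^sub>R A + q *\<^sub>R B) = of_real p * qtrace A + of_real q * qtrace B"
  by (simp add: qtrace_def sum_2) (simp add: scaleR_conv_of_real algebra_simps)

lemma matrix_add_rdistrib: "((A::qmat) + B) ** C = A ** C + B ** C"
  by (simp add: vec_eq_iff matrix_matrix_mult_def sum.distrib distrib_right)

lemma qscale_comb: "qscale c (p *\<^sub>R A + q *\<^sub>R B) = p *\<^sub>R qscale c A + q *\<^sub>R qscale c B"
  by (simp add: qscale_def vec_eq_iff scaleR_conv_of_real algebra_simps)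

lemma qscale_conj: "U ** qscale c X ** V = qscale c (U ** X ** V)"
  by (simp add: qscale_def vec_eq_iff forall_2 matrix_matrix_mult_def sum_2 algebra_simps)

lemma CPTP_mix_conj:
  assumes "CPTP E1" "CPTP E2" "0 \<le> p" "p \<le> 1"
    and unitary_trace: "\<And>X. qtrace (U ** X ** qadj U) = qtrace X"
  shows "CPTP (\<lambda>X. p *\<^sub>R E1 X + (1 - p) *\<^sub>R E2 (U ** X ** qadj U))"
proof -
  have lin: "qlinear E1" "qlinear E2"
    and cp: "completely_positive E1" "completely_positive E2"
    and tp: "trace_preserving E1" "trace_preserving E2"
    using assms(1,2) unfolding CPTP_def by auto
  have "qlinear (\<lambda>X. p *\<^sub>R E1 X + (1 - p) *\<^sub>R E2 (U ** X ** qadj U))"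
    using lin unfolding qlinear_def
    by (simp add: matrix_add_ldistrib matrix_add_rdistrib qscale_conj qscale_comb scaleR_add_right)
  moreover have "completely_positive (\<lambda>X. p *\<^sub>R E1 X + (1 - p) *\<^sub>R E2 (U ** X ** qadj U))"
    unfolding completely_positive_def
  proof (intro allI impI)
    fix n M
    assume M: "block_psd n M"
    have "block_psd n (\<lambda>i j. E1 (M i j))"
      using cp(1) M unfolding completely_positive_def by blast
    moreover have "block_psd n (\<lambda>i j. E2 (U ** M i j ** qadj U))"
      using cp(2) block_psd_conj[OF M] unfolding completely_positive_def by blast
    ultimately show "block_psd n (\<lambda>i j. p *\<^sub>R E1 (M i j) + (1 - p) *\<^sub>R E2 (U ** M i j ** qadj U))"
      using block_psd_nonneg_comb assms(3,4) by simp
  qed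
  moreover have "trace_preserving (\<lambda>X. p *\<^sub>R E1 X + (1 - p) *\<^sub>R E2 (U ** X ** qadj U))"
    using tp unitary_trace unfolding trace_preserving_def
    by (simp add: qtrace_comb) (simp add: algebra_simps)
  ultimately show ?thesis
    unfolding CPTP_def by blast
qed

lemma contractive_mix_transpose:
  assumes "contractive f" "density r" "density q"
    and "CPTP E1" "CPTP E2" "0 \<le> p" "p \<le> 1"
    and V: "\<And>X. V X = p *\<^sub>R E1 X + (1 - p) *\<^sub>R E2 (transpose X)"
  shows "f (V r) (V q) \<le> f r q"
proof -
  obtain U where U: "\<And>X. qtrace (U ** X ** qadj U) = qtrace X"
    "U ** r ** qadj U = transpose r" "U ** q ** qadj U = transpose q"
    using transpose_pair_by_unitary assms(2,3) by blast
  define \<Phi> where "\<Phi> X = p *\<^sub>R E1 X + (1 - p) *\<^sub>R E2 (U ** X ** qadj U)" for X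
  have "CPTP \<Phi>"
    unfolding \<Phi>_def using CPTP_mix_conj assms(4-7) U(1) by blast
  moreover have "V r = \<Phi> r" "V q = \<Phi> q"
    using U(2,3) unfolding V \<Phi>_def by simp_all
  ultimately show ?thesis
    using assms(1-3) unfolding contractive_def by simp
qed

lemma deriv_nonpos_if_decreasing:
  assumes decr: "\<And>s t. a \<le> s \<Longrightarrow> s \<le> t \<Longrightarrow> g t \<le> g s"
    and "a \<le> t" and der: "(g has_real_derivative D) (at t)"
  shows "D \<le> 0"
proof (rule ccontr)
  assume "\<not> D \<le> 0"
  then obtain d where "d > 0" and incr: "\<And>h. 0 < h \<Longrightarrow> h < d \<Longrightarrow> g t < g (t + h)"
    using DERIV_pos_inc_right[OF der] by auto
  then have "g t < g (t + d/2)"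
    by simp
  moreover have "g (t + d/2) \<le> g t"
    using decr \<open>a \<le> t\<close> \<open>d > 0\<close> by simp
  ultimately show False
    by simp
qed

theorem theorem1:
  fixes \<Lambda> :: "real \<Rightarrow> qmat \<Rightarrow> qmat"
    and f :: "qmat \<Rightarrow> qmat \<Rightarrow> real"
    and \<rho> \<sigma> :: qmat
  assumes cptp: "\<forall>t\<ge>0. CPTP (\<Lambda> t)"
    and init: "\<Lambda> 0 = id"
    and decomp: "\<forall>s t. 0 \<le> s \<longrightarrow> s \<le> t \<longrightarrow>
        (\<exists>V p E1 E2. qlinear V \<and> \<Lambda> t = V \<circ> \<Lambda> s \<and> 0 \<le> p \<and> p \<le> 1 \<and>
           CPTP E1 \<and> CPTP E2 \<and>
           (\<forall>X. V X = p *\<^sub>R E1 X + (1 - p) *\<^sub>R E2 (transpose X)))"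
    and contr: "contractive f"
    and rho: "density \<rho>" and sigma: "density \<sigma>"
  shows "(\<forall>s t. 0 \<le> s \<longrightarrow> s \<le> t \<longrightarrow>
            f (\<Lambda> t \<rho>) (\<Lambda> t \<sigma>) \<le> f (\<Lambda> s \<rho>) (\<Lambda> s \<sigma>)) \<and>
         (\<forall>t D. 0 < t \<longrightarrow>
            ((\<lambda>u. f (\<Lambda> u \<rho>) (\<Lambda> u \<sigma>)) has_real_derivative D) (at t) \<longrightarrow> D \<le> 0)"
proof -
  have decr: "f (\<Lambda> t \<rho>) (\<Lambda> t \<sigma>) \<le> f (\<Lambda> s \<rho>) (\<Lambda> s \<sigma>)" if st: "0 \<le> s" "s \<le> t" for s t
  proof -
    obtain V p E1 E2 where "\<Lambda> t = V \<circ> \<Lambda> s" "0 \<le> p" "p \<le> 1" "CPTP E1" "CPTP E2"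
      "\<And>X. V X = p *\<^sub>R E1 X + (1 - p) *\<^sub>R E2 (transpose X)"
      using decomp st by blast
    moreover have "density (\<Lambda> s \<rho>)" "density (\<Lambda> s \<sigma>)"
      using density_CPTP_image cptp st rho sigma by auto
    ultimately show ?thesis
      using contractive_mix_transpose[OF contr] by simp
  qed
  moreover have "D \<le> 0"
    if "0 < t" "((\<lambda>u. f (\<Lambda> u \<rho>) (\<Lambda> u \<sigma>)) has_real_derivative D) (at t)" for t D
    using deriv_nonpos_if_decreasing[where g = "\<lambda>u. f (\<Lambda> u \<rho>) (\<Lambda> u \<sigma>)" and a = 0]
      decr that by (meson less_imp_le)
  ultimately show ?thesis
    by blast
qed

end
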